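(* Any conventional higher-order logic built on Combinatory ReFLect (CR) is inconsistent.
   Context: Combinatory ReFLect (CR) is defined as follows. Types: $\sigma ::= \mathsf{bool} \mid \mathsf{unit} \mid \mathsf{term} \mid \sigma_1 \to \sigma_2$. Terms: $e ::= \mathsf{I}_\sigma \mid \mathsf{K}_{\sigma,\tau} \mid \mathsf{S}_{\sigma,\tau,\upsilon} \mid \mathsf{value}_\sigma \mid \mathsf{lift} \mid \mathsf{app} \mid e_1\,e_2 \mid \ulcorner e\urcorner$, where $\ulcorner e\urcorner$ is the quotation of $e$. Typing rules: $\mathsf{I}_\sigma:\sigma\to\sigma$; $\mathsf{K}_{\sigma,\tau}:\sigma\to\tau\to\sigma$; $\mathsf{S}_{\sigma,\tau,\upsilon}:(\sigma\to\tau\to\upsilon)\to(\sigma\to\tau)\to\sigma\to\upsilon$; $\mathsf{value}_\sigma:\mathsf{term}\to\sigma$; $\mathsf{lift}:\mathsf{term}\to\mathsf{term}$; $\mathsf{app}:\mathsf{term}\to\mathsf{term}\to\mathsf{term}$; if $e_1:\sigma\to\tau$ and $e_2:\sigma$ then $e_1\,e_2:\tau$; if $e:\sigma$ then $\ulcorner e\urcorner:\mathsf{term}$. Reduction rules: $\mathsf{I}_\sigma\,e\Rightarrow e$; $\mathsf{K}_{\sigma,\tau}\,e_1\,e_2\Rightarrow e_1$; $\mathsf{S}_{\sigma,\tau,\upsilon}\,e_1\,e_2\,e_3\Rightarrow e_1\,e_3\,(e_2\,e_3)$; if $e:\sigma$ then $\mathsf{value}_\sigma\,\ulcorner e\urcorner\Rightarrow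 e$; $\mathsf{lift}\,\ulcorner s\urcorner\Rightarrow\ulcorner\ulcorner s\urcorner\urcorner$; if $e_1\,e_2$ is well typed then $\mathsf{app}\,\ulcorner e_1\urcorner\,\ulcorner e_2\urcorner\Rightarrow\ulcorner e_1\,e_2\urcorner$. A conventional higher-order logic built on CR is one formulated in the style of Church's simple theory of types / the HOL logic, but with CR (extended by the usual logical constants, including equality and negation $\neg:\mathsf{bool}\to\mathsf{bool}$, typed by the same type system) in place of the simply typed $\lambda$-calculus: its terms of type $\mathsf{bool}$ are formulas, provable equality is reflexive, symmetric, transitive and closed under congruence, every instance of a reduction rule $e\Rightarrow e'$ yields a theorem $\vdash e=e'$, and it has the usual classical rules for negation (so that a proof of $\vdash p = \neg p$ for a formula $p$ yields a contradiction). Inconsistent means that a contradiction (every formula, in particular falsity) is provable. *)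

theory Defs
  imports Main
begin

datatype ty = TBool | TUnit | TTerm | TFun ty ty

datatype tm =
    CI ty
  | CK ty ty
  | CS ty ty ty
  | CValue ty
  | CLift
  | CApp
  | CEq ty
  | CNeg
  | CFalse
  | Ap tm tm
  | Quote tm

inductive has_type :: "tm \<Rightarrow> ty \<Rightarrow> bool" where
  ty_I: "has_type (CI s) (TFun s s)"
| ty_K: "has_type (CK s t) (TFun s (TFun t s))"
| ty_S: "has_type (CS s t u)
           (TFun (TFun s (TFun t u)) (TFun (TFun s t) (TFun s u)))"
| ty_value: "has_type (CValue s) (TFun TTerm s)"
| ty_lift: "has_type CLift (TFun TTerm TTerm)"
| ty_app: "has_type CApp (TFun TTerm (TFun TTerm TTerm))"
| ty_eq: "has_type (CEq s) (TFun s (TFun s TBool))"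
| ty_neg: "has_type CNeg (TFun TBool TBool)"
| ty_false: "has_type CFalse TBool"
| ty_Ap: "has_type e1 (TFun s t) \<Longrightarrow> has_type e2 s \<Longrightarrow> has_type (Ap e1 e2) t"
| ty_Quote: "has_type e s \<Longrightarrow> has_type (Quote e) TTerm"

definition well_typed :: "tm \<Rightarrow> bool" where
  "well_typed e \<longleftrightarrow> (\<exists>s. has_type e s)"

inductive red :: "tm \<Rightarrow> tm \<Rightarrow> bool" where
  red_I: "red (Ap (CI s) e) e"
| red_K: "red (Ap (Ap (CK s t) e1) e2) e1"
| red_S: "red (Ap (Ap (Ap (CS s t u) e1) e2) e3) (Ap (Ap e1 e3) (Ap e2 e3))"
| red_value: "has_type e s \<Longrightarrow> red (Ap (CValue s) (Quote e)) e"
| red_lift: "red (Ap CLift (Quote e)) (Quote (Quote e))"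
| red_app: "well_typed (Ap e1 e2) \<Longrightarrow>
             red (Ap (Ap CApp (Quote e1)) (Quote e2)) (Quote (Ap e1 e2))"

abbreviation mk_eq :: "ty \<Rightarrow> tm \<Rightarrow> tm \<Rightarrow> tm" where
  "mk_eq s a b \<equiv> Ap (Ap (CEq s) a) b"

text \<open>A logic is given by its derivability relation on sequents
  (hypotheses \<turnstile> conclusion). It is conventional if it is closed under the
  following rules.\<close>

definition conventional_logic :: "(tm set \<Rightarrow> tm \<Rightarrow> bool) \<Rightarrow> bool" where
  "conventional_logic thm \<longleftrightarrow>
     (\<forall>\<Gamma> p. p \<in> \<Gamma> \<longrightarrow> has_type p TBool \<longrightarrow> thm \<Gamma> p)
   \<and> (\<forall>\<Gamma> e s. has_type e s \<longrightarrow> thm \<Gamma> (mk_eq s e e))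
   \<and> (\<forall>\<Gamma> s a b. thm \<Gamma> (mk_eq s a b) \<longrightarrow> thm \<Gamma> (mk_eq s b a))
   \<and> (\<forall>\<Gamma> s a b c. thm \<Gamma> (mk_eq s a b) \<longrightarrow> thm \<Gamma> (mk_eq s b c) \<longrightarrow> thm \<Gamma> (mk_eq s a c))
   \<and> (\<forall>\<Gamma> s t f g a b. thm \<Gamma> (mk_eq (TFun s t) f g) \<longrightarrow> thm \<Gamma> (mk_eq s a b)
        \<longrightarrow> thm \<Gamma> (mk_eq t (Ap f a) (Ap g b)))
   \<and> (\<forall>\<Gamma> e e' s. red e e' \<longrightarrow> has_type e s \<longrightarrow> thm \<Gamma> (mk_eq s e e'))
   \<and> (\<forall>\<Gamma> p q. thm \<Gamma> (mk_eq TBool p q) \<longrightarrow> thm \<Gamma> p \<longrightarrow> thm \<Gamma> q)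
   \<and> (\<forall>\<Gamma> p. has_type p TBool \<longrightarrow> thm (insert p \<Gamma>) CFalse \<longrightarrow> thm \<Gamma> (Ap CNeg p))
   \<and> (\<forall>\<Gamma> p. thm \<Gamma> (Ap CNeg p) \<longrightarrow> thm \<Gamma> p \<longrightarrow> thm \<Gamma> CFalse)
   \<and> (\<forall>\<Gamma> p. has_type p TBool \<longrightarrow> thm (insert (Ap CNeg p) \<Gamma>) CFalse \<longrightarrow> thm \<Gamma> p)
   \<and> (\<forall>\<Gamma> q. thm \<Gamma> CFalse \<longrightarrow> has_type q TBool \<longrightarrow> thm \<Gamma> q)"

definition inconsistent :: "(tm set \<Rightarrow> tm \<Rightarrow> bool) \<Rightarrow> bool" where
  "inconsistent thm \<longleftrightarrow> thm {} CFalse \<and> (\<forall>q. has_type q TBool \<longrightarrow> thm {} q)"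

end

theory Submission
  imports Defs
begin

text \<open>Quotation together with \<open>app\<close> and \<open>lift\<close> lets a term of type \<open>term \<Rightarrow> \<sigma>\<close> be
  applied to its own quotation inside the logic: with \<open>diag \<ulcorner>e\<urcorner> = \<ulcorner>e \<ulcorner>e\<urcorner>\<urcorner>\<close> and
  \<open>D = f \<circ> value\<^sub>\<sigma> \<circ> diag\<close>, the term \<open>D \<ulcorner>D\<urcorner>\<close> is provably equal to \<open>f (D \<ulcorner>D\<urcorner>)\<close>, so every
  \<open>f : \<sigma> \<Rightarrow> \<sigma>\<close> has a provable fixed point. For \<open>f = \<not>\<close> this is a liar sentence
  \<open>L = \<not> L\<close>, from which the classical negation rules derive falsity.\<close>

definition compose :: "ty \<Rightarrow> ty \<Rightarrow> ty \<Rightarrow> tm \<Rightarrow> tm \<Rightarrow> tm" where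
  "compose a b c f g = Ap (Ap (CS a b c) (Ap (CK (TFun b c) a) f)) g"

lemma has_type_compose:
  "has_type f (TFun b c) \<Longrightarrow> has_type g (TFun a b) \<Longrightarrow> has_type (compose a b c f g) (TFun a c)"
  unfolding compose_def by (meson has_type.intros)

definition diag :: tm where
  "diag = Ap (Ap (CS TTerm TTerm TTerm) CApp) CLift"

lemma has_type_diag: "has_type diag (TFun TTerm TTerm)"
  unfolding diag_def by (meson has_type.intros)

definition fixpoint_fun :: "ty \<Rightarrow> tm \<Rightarrow> tm" where
  "fixpoint_fun s f = compose TTerm s s f (compose TTerm TTerm s (CValue s) diag)"

definition fixpoint :: "ty \<Rightarrow> tm \<Rightarrow> tm" where
  "fixpoint s f = Ap (fixpoint_fun s f) (Quote (fixpoint_fun s f))"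

lemma has_type_fixpoint_fun:
  "has_type f (TFun s s) \<Longrightarrow> has_type (fixpoint_fun s f) (TFun TTerm s)"
  unfolding fixpoint_fun_def
  by (meson has_type_compose has_type_diag has_type.intros)

lemma has_type_fixpoint: "has_type f (TFun s s) \<Longrightarrow> has_type (fixpoint s f) s"
  unfolding fixpoint_def by (meson has_type_fixpoint_fun has_type.intros)

locale conventional_cr_logic =
  fixes derivable :: "tm set \<Rightarrow> tm \<Rightarrow> bool"
  assumes conventional: "conventional_logic derivable"
begin

lemma hyp: "p \<in> \<Gamma> \<Longrightarrow> has_type p TBool \<Longrightarrow> derivable \<Gamma> p"
  using conventional unfolding conventional_logic_def by metis

lemma eq_refl: "has_type e s \<Longrightarrow> derivable \<Gamma> (mk_eq s e e)"
  using conventional unfolding conventional_logic_def by metis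

lemma eq_sym: "derivable \<Gamma> (mk_eq s a b) \<Longrightarrow> derivable \<Gamma> (mk_eq s b a)"
  using conventional unfolding conventional_logic_def by metis

lemma eq_trans: "derivable \<Gamma> (mk_eq s a b) \<Longrightarrow> derivable \<Gamma> (mk_eq s b c) \<Longrightarrow> derivable \<Gamma> (mk_eq s a c)"
  using conventional unfolding conventional_logic_def by metis

lemma eq_cong:
  "derivable \<Gamma> (mk_eq (TFun s t) f g) \<Longrightarrow> derivable \<Gamma> (mk_eq s a b) \<Longrightarrow> derivable \<Gamma> (mk_eq t (Ap f a) (Ap g b))"
  using conventional unfolding conventional_logic_def by metis

lemma eq_red: "red e e' \<Longrightarrow> has_type e s \<Longrightarrow> derivable \<Gamma> (mk_eq s e e')"
  using conventional unfolding conventional_logic_def by metis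

lemma eq_mp: "derivable \<Gamma> (mk_eq TBool p q) \<Longrightarrow> derivable \<Gamma> p \<Longrightarrow> derivable \<Gamma> q"
  using conventional unfolding conventional_logic_def by metis

lemma negI: "has_type p TBool \<Longrightarrow> derivable (insert p \<Gamma>) CFalse \<Longrightarrow> derivable \<Gamma> (Ap CNeg p)"
  using conventional unfolding conventional_logic_def by metis

lemma negE: "derivable \<Gamma> (Ap CNeg p) \<Longrightarrow> derivable \<Gamma> p \<Longrightarrow> derivable \<Gamma> CFalse"
  using conventional unfolding conventional_logic_def by metis

lemma FalseE: "derivable \<Gamma> CFalse \<Longrightarrow> has_type q TBool \<Longrightarrow> derivable \<Gamma> q"
  using conventional unfolding conventional_logic_def by metis

lemma eq_cong_arg: "has_type f (TFun s t) \<Longrightarrow> derivable \<Gamma> (mk_eq s a b) \<Longrightarrow> derivable \<Gamma> (mk_eq t (Ap f a) (Ap f b))"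
  by (rule eq_cong[OF eq_refl])

lemma eq_compose:
  assumes f: "has_type f (TFun b c)" and g: "has_type g (TFun a b)" and x: "has_type x a"
  shows "derivable \<Gamma> (mk_eq c (Ap (compose a b c f g) x) (Ap f (Ap g x)))"
proof -
  have "derivable \<Gamma> (mk_eq c (Ap (compose a b c f g) x) (Ap (Ap (Ap (CK (TFun b c) a) f) x) (Ap g x)))"
    using eq_red[OF red_S] has_type_compose[OF f g] x
    unfolding compose_def by (meson has_type.intros)
  moreover have "derivable \<Gamma> (mk_eq (TFun b c) (Ap (Ap (CK (TFun b c) a) f) x) f)"
    using eq_red[OF red_K] f x by (meson has_type.intros)
  ultimately show ?thesis
    using eq_trans eq_cong eq_refl g x by (meson has_type.intros)
qed

lemma eq_diag:
  assumes e: "has_type e (TFun TTerm s)"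
  shows "derivable \<Gamma> (mk_eq TTerm (Ap diag (Quote e)) (Quote (Ap e (Quote e))))"
proof -
  have q: "has_type (Quote e) TTerm"
    using e by (rule ty_Quote)
  have "derivable \<Gamma> (mk_eq TTerm (Ap diag (Quote e)) (Ap (Ap CApp (Quote e)) (Ap CLift (Quote e))))"
    using eq_red[OF red_S] has_type_diag q unfolding diag_def by (meson has_type.intros)
  moreover have "derivable \<Gamma> (mk_eq TTerm (Ap CLift (Quote e)) (Quote (Quote e)))"
    using eq_red[OF red_lift] q by (meson has_type.intros)
  moreover have "well_typed (Ap e (Quote e))"
    unfolding well_typed_def using e q by (meson has_type.intros)
  then have "derivable \<Gamma> (mk_eq TTerm (Ap (Ap CApp (Quote e)) (Quote (Quote e))) (Quote (Ap e (Quote e))))"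
    using eq_red[OF red_app] q by (meson has_type.intros)
  ultimately show ?thesis
    using eq_trans eq_cong_arg q by (meson has_type.intros)
qed

theorem fixpoint_eq:
  assumes f: "has_type f (TFun s s)"
  shows "derivable \<Gamma> (mk_eq s (fixpoint s f) (Ap f (fixpoint s f)))"
proof -
  define D where "D = fixpoint_fun s f"
  define V where "V = compose TTerm TTerm s (CValue s) diag"
  have D: "has_type D (TFun TTerm s)"
    unfolding D_def using f by (rule has_type_fixpoint_fun)
  have q: "has_type (Quote D) TTerm"
    using D by (rule ty_Quote)
  have V: "has_type V (TFun TTerm s)"
    unfolding V_def by (meson has_type_compose has_type_diag has_type.intros)
  have "D = compose TTerm s s f V"
    unfolding D_def V_def fixpoint_fun_def ..
  then have unfold_D: "derivable \<Gamma> (mk_eq s (Ap D (Quote D)) (Ap f (Ap V (Quote D))))"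
    using eq_compose[OF f V q] by simp
  have "derivable \<Gamma> (mk_eq s (Ap V (Quote D)) (Ap (CValue s) (Ap diag (Quote D))))"
    unfolding V_def by (rule eq_compose[OF ty_value has_type_diag q])
  moreover have "derivable \<Gamma> (mk_eq TTerm (Ap diag (Quote D)) (Quote (Ap D (Quote D))))"
    using D by (rule eq_diag)
  moreover have "derivable \<Gamma> (mk_eq s (Ap (CValue s) (Quote (Ap D (Quote D)))) (Ap D (Quote D)))"
    using eq_red[OF red_value] D q by (meson has_type.intros)
  ultimately have "derivable \<Gamma> (mk_eq s (Ap V (Quote D)) (Ap D (Quote D)))"
    using eq_trans eq_cong_arg[OF ty_value] by blast
  then show ?thesis
    using eq_trans[OF unfold_D eq_cong_arg[OF f]] unfolding fixpoint_def D_def by blast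
qed

lemma false_if_eq_neg:
  assumes p: "has_type p TBool" and liar: "\<And>\<Gamma>. derivable \<Gamma> (mk_eq TBool p (Ap CNeg p))"
  shows "derivable {} CFalse"
proof -
  have "derivable {p} p"
    using p by (simp add: hyp)
  then have "derivable {p} CFalse"
    using negE eq_mp[OF liar] by blast
  then have not_p: "derivable {} (Ap CNeg p)"
    using negI[OF p] by blast
  then have "derivable {} p"
    using eq_mp[OF eq_sym[OF liar]] by blast
  with not_p show ?thesis
    by (rule negE)
qed

theorem inconsistent: "inconsistent derivable"
proof -
  have "derivable {} CFalse"
    using false_if_eq_neg has_type_fixpoint fixpoint_eq ty_neg by blast
  then show ?thesis
    unfolding inconsistent_def using FalseE by blast
qed

end

theorem corollary1:
  assumes "conventional_logic thm"
  shows "inconsistent thm"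
  using assms by (rule conventional_cr_logic.inconsistent[unfolded conventional_cr_logic_def])

end
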